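(* In the even setting below, define recursively, for all $k\in\mathbb Z$ and $\ell\ge 0$, block columns $G^{(k)}_{2\ell}$, $\hat G^{(k)}_{2\ell+1}$ (of size $mn\times n$) and $n\times n$ matrices $\alpha_i^j(k)$ by $G^{(k)}_0=r_k$, $\hat G^{(k)}_{2\ell+1}=p_k\,(G^{(k+1)}_{2\ell})_{\mathrm{last}}+\Gamma G^{(k+1)}_{2\ell}$, $G^{(k)}_{2\ell+2}=\Gamma\hat G^{(k+1)}_{2\ell+1}$, $\alpha_0^{2\ell+1}(k)=(G^{(k+1)}_{2\ell})_{\mathrm{last}}$, $\alpha_{2r}^{2\ell+1}(k)=\alpha_{2r-1}^{2\ell}(k+1)$ for $1\le r\le \ell$, $\alpha_{2r+1}^{2\ell+2}(k)=\alpha_{2r}^{2\ell+1}(k+1)$ for $0\le r\le\ell$. Then for all $k$ and all $\ell\ge 0$, $$F^{(k)}_{2\ell}=\sum_{r=1}^{\ell}F^{(k)}_{2r-1}\alpha_{2r-1}^{2\ell}(k)+G^{(k)}_{2\ell},\qquad F^{(k)}_{2\ell+1}=\sum_{r=0}^{\ell}F^{(k)}_{2r}\alpha_{2r}^{2\ell+1}(k)+\hat G^{(k)}_{2\ell+1}.$$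
   Context: Even setting: integers $n\ge1$, $s\ge 2$, $m=2s$. For each $k\in\mathbb Z$ let $a_k^0,\dots,a_k^{m-1}$ be $n\times n$ matrices, $N$-periodic in $k$. $Q_k$ is the $mn\times mn$ block matrix with $I_n$ in the blocks $(i+1,i)$, $i=1,\dots,m-1$, last block column $(a_k^0;a_k^1;\dots;a_k^{m-1})$, and $O_n$ elsewhere. $r_k$ is the block column $(O_n;a_k^1;O_n;a_k^3;\dots;O_n;a_k^{2s-1})$ and $p_k=(a_k^0;O_n;a_k^2;O_n;\dots;a_k^{2s-2};O_n)$ (so the last block column of $Q_k$ is $p_k+r_k$). $\Gamma$ is the $mn\times mn$ block matrix with $I_n$ in blocks $(i+1,i)$ and $O_n$ elsewhere. $F^{(k)}_0=r_k$ and $F^{(k)}_\ell=Q_kQ_{k+1}\cdots Q_{k+\ell-1}r_{k+\ell}$ for $\ell\ge1$. For a block column $A$, $(A)_{\mathrm{last}}$ denotes its last $n\times n$ block. *)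

theory Defs
  imports "Jordan_Normal_Form.Matrix"
begin

text \<open>Block conventions: an mn x mn (resp. mn x n) block matrix has its (0-indexed)
 block (bi,bj) in rows bi*n..bi*n+n-1 and columns bj*n..bj*n+n-1.
 Blocks are 0-indexed here: the paper's block (i+1,i), i=1..m-1, is block (i,i-1) here.\<close>

definition msum :: "nat \<Rightarrow> nat \<Rightarrow> ('b \<Rightarrow> 'a::comm_ring_1 mat) \<Rightarrow> 'b set \<Rightarrow> 'a mat" where
  "msum nr nc f I = mat nr nc (\<lambda>(i,j). \<Sum>x\<in>I. f x $$ (i,j))"

definition blockcol :: "nat \<Rightarrow> nat \<Rightarrow> (nat \<Rightarrow> 'a::comm_ring_1 mat) \<Rightarrow> 'a mat" where
  "blockcol n m f = mat (m*n) n (\<lambda>(i,j). f (i div n) $$ (i mod n, j))"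

definition lastblk :: "nat \<Rightarrow> nat \<Rightarrow> 'a::comm_ring_1 mat \<Rightarrow> 'a mat" where
  "lastblk n m A = mat n n (\<lambda>(i,j). A $$ ((m-1)*n + i, j))"

definition Gam :: "nat \<Rightarrow> nat \<Rightarrow> 'a::comm_ring_1 mat" where
  "Gam n m = mat (m*n) (m*n) (\<lambda>(i,j).
     if i div n = j div n + 1 \<and> i mod n = j mod n then 1 else 0)"

definition Qmat :: "nat \<Rightarrow> nat \<Rightarrow> (int \<Rightarrow> nat \<Rightarrow> 'a::comm_ring_1 mat) \<Rightarrow> int \<Rightarrow> 'a mat" where
  "Qmat n m a k = mat (m*n) (m*n) (\<lambda>(i,j).
     if j div n = m - 1 then a k (i div n) $$ (i mod n, j mod n)
     else if i div n = j div n + 1 \<and> i mod n = j mod n then 1 else 0)"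

definition rcol :: "nat \<Rightarrow> nat \<Rightarrow> (int \<Rightarrow> nat \<Rightarrow> 'a::comm_ring_1 mat) \<Rightarrow> int \<Rightarrow> 'a mat" where
  "rcol n m a k = blockcol n m (\<lambda>i. if odd i then a k i else 0\<^sub>m n n)"

definition pcol :: "nat \<Rightarrow> nat \<Rightarrow> (int \<Rightarrow> nat \<Rightarrow> 'a::comm_ring_1 mat) \<Rightarrow> int \<Rightarrow> 'a mat" where
  "pcol n m a k = blockcol n m (\<lambda>i. if even i then a k i else 0\<^sub>m n n)"

fun Qprod :: "nat \<Rightarrow> nat \<Rightarrow> (int \<Rightarrow> nat \<Rightarrow> 'a::comm_ring_1 mat) \<Rightarrow> int \<Rightarrow> nat \<Rightarrow> 'a mat" where
  "Qprod n m a k 0 = 1\<^sub>m (m*n)"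
| "Qprod n m a k (Suc l) = Qprod n m a k l * Qmat n m a (k + int l)"

definition Fcol :: "nat \<Rightarrow> nat \<Rightarrow> (int \<Rightarrow> nat \<Rightarrow> 'a::comm_ring_1 mat) \<Rightarrow> int \<Rightarrow> nat \<Rightarrow> 'a mat" where
  "Fcol n m a k l = Qprod n m a k l * rcol n m a (k + int l)"

(* Gev n m a k l = G^{(k)}_{2l} *)
fun Gev :: "nat \<Rightarrow> nat \<Rightarrow> (int \<Rightarrow> nat \<Rightarrow> 'a::comm_ring_1 mat) \<Rightarrow> int \<Rightarrow> nat \<Rightarrow> 'a mat" where
  "Gev n m a k 0 = rcol n m a k"
| "Gev n m a k (Suc l) = Gam n m *
     (pcol n m a (k+1) * lastblk n m (Gev n m a (k+2) l) + Gam n m * Gev n m a (k+2) l)"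

(* Ghat n m a k l = \<hat>G^{(k)}_{2l+1} = p_k (G^{(k+1)}_{2l})_last + Gamma G^{(k+1)}_{2l} *)
definition Ghat :: "nat \<Rightarrow> nat \<Rightarrow> (int \<Rightarrow> nat \<Rightarrow> 'a::comm_ring_1 mat) \<Rightarrow> int \<Rightarrow> nat \<Rightarrow> 'a mat" where
  "Ghat n m a k l = pcol n m a k * lastblk n m (Gev n m a (k+1) l) + Gam n m * Gev n m a (k+1) l"

lemma Gev_Suc_Ghat: "Gev n m a k (Suc l) = Gam n m * Ghat n m a (k+1) l"
  by (simp add: Ghat_def add.assoc)

(* alpha n m a j i k = \<alpha>_i^j(k); only meaningful for the index pairs used in the paper
   (i < j, i and j of opposite parity); other values are set to O_n *)
fun alpha :: "nat \<Rightarrow> nat \<Rightarrow> (int \<Rightarrow> nat \<Rightarrow> 'a::comm_ring_1 mat) \<Rightarrow> nat \<Rightarrow> nat \<Rightarrow> int \<Rightarrow> 'a mat" where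
  "alpha n m a 0 i k = 0\<^sub>m n n"
| "alpha n m a (Suc j) i k =
     (if i = 0 then (if even j then lastblk n m (Gev n m a (k+1) (j div 2)) else 0\<^sub>m n n)
      else alpha n m a j (i - 1) (k+1))"

end

theory Submission
  imports Defs
begin

text \<open>Write \<open>F_j\<close>, \<open>G_j\<close>, \<open>\<alpha>_i^j\<close> for the objects at base index \<open>k\<close> and
  \<open>F'_j\<close>, \<open>G'_j\<close> for those at \<open>k + 1\<close>, where \<open>G_j\<close> means \<open>\<hat>G_j\<close> for odd \<open>j\<close>.
  Both identities are instances of the single expansion
  \<open>F_j = (\<Sum>i<j. F_i \<alpha>_i^j) + G_j\<close>, proved by induction on \<open>j\<close> for all \<open>k\<close> at once.
  Since \<open>F_{j+1} = Q_k F'_j\<close>, applying \<open>Q_k\<close> to the expansion of \<open>F'_j\<close> shifts every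
  index by one, and it remains to split \<open>Q_k G'_j = \<Gamma> G'_j + (p_k + r_k) (G'_j)_last\<close> into the
  new term \<open>r_k \<alpha>_0^{j+1}\<close> and \<open>G_{j+1}\<close>. For odd \<open>j\<close> this requires the last block of
  \<open>\<hat>G\<close> to vanish, which is where \<open>m\<close> even enters: every \<open>G_{2l}\<close> is zero in all even block
  positions, \<open>\<Gamma>\<close> shifts blocks down by one, and \<open>p_k\<close> is zero in all odd block positions.\<close>

lemma index_mult_mat_sum:
  assumes "A \<in> carrier_mat nr nk" "B \<in> carrier_mat nk nc" "i < nr" "j < nc"
  shows "(A * B) $$ (i,j) = (\<Sum>t<nk. A $$ (i,t) * B $$ (t,j))"
  using assms by (auto simp: scalar_prod_def atLeast0LessThan intro!: sum.cong)

lemma block_index_less: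
  fixes i r m n :: nat
  assumes "i < m" "r < n"
  shows "i * n + r < m * n"
proof -
  have "i * n + r < Suc i * n" using assms(2) by simp
  also have "\<dots> \<le> m * n" using assms(1) by (intro mult_le_mono1) simp
  finally show ?thesis .
qed

lemma msum_carrier [simp]: "msum nr nc f I \<in> carrier_mat nr nc"
  and msum_dims [simp]: "dim_row (msum nr nc f I) = nr" "dim_col (msum nr nc f I) = nc"
  by (simp_all add: msum_def)

lemma msum_index: "i < nr \<Longrightarrow> j < nc \<Longrightarrow> msum nr nc f I $$ (i,j) = (\<Sum>x\<in>I. f x $$ (i,j))"
  by (simp add: msum_def)

lemma msum_mult_left:
  assumes "A \<in> carrier_mat nr' nr" "\<And>x. x \<in> I \<Longrightarrow> f x \<in> carrier_mat nr nc"
  shows "A * msum nr nc f I = msum nr' nc (\<lambda>x. A * f x) I"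
proof (rule eq_matI)
  fix i j assume "i < dim_row (msum nr' nc (\<lambda>x. A * f x) I)" "j < dim_col (msum nr' nc (\<lambda>x. A * f x) I)"
  then have ij: "i < nr'" "j < nc" by auto
  have "(A * msum nr nc f I) $$ (i,j) = (\<Sum>t<nr. A $$ (i,t) * (\<Sum>x\<in>I. f x $$ (t,j)))"
    using ij by (subst index_mult_mat_sum[OF assms(1) msum_carrier]) (simp_all add: msum_index)
  also have "\<dots> = (\<Sum>x\<in>I. \<Sum>t<nr. A $$ (i,t) * f x $$ (t,j))"
    by (simp add: sum_distrib_left sum.swap[of _ I])
  also have "\<dots> = msum nr' nc (\<lambda>x. A * f x) I $$ (i,j)"
    using ij by (auto simp: msum_index intro!: sum.cong index_mult_mat_sum[symmetric, OF assms(1)] assms(2))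
  finally show "(A * msum nr nc f I) $$ (i,j) = msum nr' nc (\<lambda>x. A * f x) I $$ (i,j)" .
qed (use assms in auto)

lemma msum_lessThan_Suc_shift:
  assumes "f 0 \<in> carrier_mat nr nc"
  shows "msum nr nc f {..<Suc j} = f 0 + msum nr nc (\<lambda>i. f (Suc i)) {..<j}"
  using assms
  by (intro eq_matI) (auto simp del: sum.lessThan_Suc simp: msum_index sum.lessThan_Suc_shift)

lemma msum_reindex_vanishing:
  assumes "inj_on g R" "g ` R \<subseteq> I" "finite I"
    and "\<And>i. i \<in> I \<Longrightarrow> i \<notin> g ` R \<Longrightarrow> f i = 0\<^sub>m nr nc"
  shows "msum nr nc f I = msum nr nc (\<lambda>r. f (g r)) R"
proof (rule eq_matI)
  fix i j assume "i < dim_row (msum nr nc (\<lambda>r. f (g r)) R)" "j < dim_col (msum nr nc (\<lambda>r. f (g r)) R)"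
  then have ij: "i < nr" "j < nc" by auto
  have "(\<Sum>x\<in>I. f x $$ (i,j)) = (\<Sum>x\<in>g ` R. f x $$ (i,j))"
    using assms ij by (intro sum.mono_neutral_right) auto
  also have "\<dots> = (\<Sum>r\<in>R. f (g r) $$ (i,j))"
    using assms(1) by (rule sum.reindex_cong) auto
  finally show "msum nr nc f I $$ (i,j) = msum nr nc (\<lambda>r. f (g r)) R $$ (i,j)"
    using ij by (simp add: msum_index)
qed auto

lemma msum_lessThan_even_vanishing:
  fixes l :: nat
  assumes "\<And>i. i < 2*l \<Longrightarrow> even i \<Longrightarrow> f i = 0\<^sub>m nr nc"
  shows "msum nr nc f {..<2*l} = msum nr nc (\<lambda>r. f (2*r - 1)) {1..l}"
proof (rule msum_reindex_vanishing)
  fix i assume i: "i \<in> {..<2*l}" "i \<notin> (\<lambda>r. 2*r - 1) ` {1..l}"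
  have "even i"
  proof (rule ccontr)
    assume "odd i"
    then have "i = 2 * ((i+1) div 2) - 1" "(i+1) div 2 \<in> {1..l}" using i(1) by auto
    then show False using i(2) by blast
  qed
  then show "f i = 0\<^sub>m nr nc" using i(1) assms by simp
qed (auto simp: inj_on_def)

lemma msum_lessThan_odd_vanishing:
  fixes l :: nat
  assumes "\<And>i. i < 2*l+1 \<Longrightarrow> odd i \<Longrightarrow> f i = 0\<^sub>m nr nc"
  shows "msum nr nc f {..<2*l+1} = msum nr nc (\<lambda>r. f (2*r)) {0..l}"
proof (rule msum_reindex_vanishing)
  fix i assume i: "i \<in> {..<2*l+1}" "i \<notin> (\<lambda>r. 2*r) ` {0..l}"
  have "odd i"
  proof
    assume "even i"
    then have "i = 2 * (i div 2)" "i div 2 \<in> {0..l}" using i(1) by auto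
    then show False using i(2) by blast
  qed
  then show "f i = 0\<^sub>m nr nc" using i(1) assms by simp
qed (auto simp: inj_on_def)

lemma Gam_carrier [simp]: "Gam n m \<in> carrier_mat (m*n) (m*n)"
  and Qmat_carrier [simp]: "Qmat n m a k \<in> carrier_mat (m*n) (m*n)"
  and pcol_carrier [simp]: "pcol n m a k \<in> carrier_mat (m*n) n"
  and rcol_carrier [simp]: "rcol n m a k \<in> carrier_mat (m*n) n"
  and lastblk_carrier [simp]: "lastblk n m X \<in> carrier_mat n n"
  by (simp_all add: Gam_def Qmat_def pcol_def rcol_def blockcol_def lastblk_def)

lemma dim_simps [simp]:
  "dim_row (Gam n m) = m*n" "dim_col (Gam n m) = m*n"
  "dim_row (Qmat n m a k) = m*n" "dim_col (Qmat n m a k) = m*n"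
  "dim_row (pcol n m a k) = m*n" "dim_col (pcol n m a k) = n"
  "dim_row (rcol n m a k) = m*n" "dim_col (rcol n m a k) = n"
  "dim_row (lastblk n m X) = n" "dim_col (lastblk n m X) = n"
  by (simp_all add: Gam_def Qmat_def pcol_def rcol_def blockcol_def lastblk_def)

lemma Qprod_carrier [simp]: "Qprod n m a k l \<in> carrier_mat (m*n) (m*n)"
  by (induction l) auto

lemma Fcol_carrier [simp]: "Fcol n m a k l \<in> carrier_mat (m*n) n"
  unfolding Fcol_def by (rule mult_carrier_mat[OF Qprod_carrier rcol_carrier])

lemma Gev_carrier [simp]: "Gev n m a k l \<in> carrier_mat (m*n) n"
proof (induction l arbitrary: k)
  case (Suc l)
  then have "dim_col (Gev n m a (k+2) l) = n" by blast
  then show ?case by (intro carrier_matI) simp_all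
qed simp

lemma Ghat_carrier [simp]: "Ghat n m a k l \<in> carrier_mat (m*n) n"
proof -
  have "dim_col (Gev n m a (k+1) l) = n" using Gev_carrier by blast
  then show ?thesis unfolding Ghat_def by (intro carrier_matI) simp_all
qed

lemma alpha_carrier [simp]: "alpha n m a j i k \<in> carrier_mat n n"
  by (induction j arbitrary: i k) auto

lemma dim_column_simps [simp]:
  "dim_row (Gev n m a k l) = m*n" "dim_col (Gev n m a k l) = n"
  "dim_row (Ghat n m a k l) = m*n" "dim_col (Ghat n m a k l) = n"
  "dim_row (Fcol n m a k l) = m*n" "dim_col (Fcol n m a k l) = n"
  "dim_row (alpha n m a j i k) = n" "dim_col (alpha n m a j i k) = n"
  using carrier_matD[OF Gev_carrier[of n m a k l]] carrier_matD[OF Ghat_carrier[of n m a k l]]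
    carrier_matD[OF Fcol_carrier[of n m a k l]] carrier_matD[OF alpha_carrier[of n m a j i k]]
  by simp_all

lemma alpha_eq_zero: "\<not> (i < j \<and> odd (j - i)) \<Longrightarrow> alpha n m a j i k = 0\<^sub>m n n"
proof (induction j arbitrary: i k)
  case (Suc j)
  then show ?case by (cases i) auto
qed simp

definition blk :: "nat \<Rightarrow> nat \<Rightarrow> 'a::comm_ring_1 mat \<Rightarrow> 'a mat" where
  "blk n i X = mat n n (\<lambda>(r,c). X $$ (i*n + r, c))"

lemma lastblk_eq_blk: "lastblk n m X = blk n (m - 1) X"
  by (simp add: lastblk_def blk_def)

lemma blk_add:
  assumes "A \<in> carrier_mat (m*n) n" "B \<in> carrier_mat (m*n) n" "i < m"
  shows "blk n i (A + B) = blk n i A + blk n i B"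
  using assms by (intro eq_matI) (auto simp: blk_def block_index_less)

lemma Gam_index:
  assumes "p < m*n" "t < m*n"
  shows "Gam n m $$ (p,t) = (if n \<le> p \<and> t = p - n then 1 else 0)"
proof -
  have "(p div n = t div n + 1 \<and> p mod n = t mod n) \<longleftrightarrow> n \<le> p \<and> t = p - n"
  proof
    assume h: "p div n = t div n + 1 \<and> p mod n = t mod n"
    have "p = (p div n) * n + p mod n" by simp
    also have "\<dots> = t + n" using h div_mult_mod_eq[of t n] by (simp add: algebra_simps)
    finally show "n \<le> p \<and> t = p - n" by simp
  next
    assume "n \<le> p \<and> t = p - n"
    then obtain d where "p = d + n" "t = d" by (metis le_add_diff_inverse2)
    moreover have "n > 0" using assms(1) by (cases n) auto
    ultimately show "p div n = t div n + 1 \<and> p mod n = t mod n" by simp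
  qed
  then show ?thesis using assms by (simp add: Gam_def)
qed

lemma Gam_mult_index:
  assumes "X \<in> carrier_mat (m*n) nc" "p < m*n" "c < nc"
  shows "(Gam n m * X) $$ (p,c) = (if n \<le> p then X $$ (p - n, c) else 0)"
proof -
  have "(Gam n m * X) $$ (p,c) = (\<Sum>t<m*n. (if n \<le> p \<and> t = p - n then 1 else 0) * X $$ (t,c))"
    using assms by (simp add: index_mult_mat_sum[OF Gam_carrier assms(1)] Gam_index[OF assms(2)] del: index_mult_mat)
  also have "\<dots> = (\<Sum>t<m*n. if n \<le> p \<and> t = p - n then X $$ (t,c) else 0)"
    by (intro sum.cong) auto
  finally show ?thesis using assms(2) by (cases "n \<le> p") (auto simp: sum.delta')
qed

lemma blk_Gam_mult_0:
  assumes "X \<in> carrier_mat (m*n) n" "0 < m"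
  shows "blk n 0 (Gam n m * X) = 0\<^sub>m n n"
  using assms block_index_less[OF assms(2)]
  by (intro eq_matI) (auto simp: blk_def Gam_mult_index[OF assms(1)] simp del: index_mult_mat)

lemma blk_Gam_mult_Suc:
  assumes "X \<in> carrier_mat (m*n) n" "Suc i < m"
  shows "blk n (Suc i) (Gam n m * X) = blk n i X"
  using assms block_index_less[OF assms(2)]
  by (intro eq_matI) (auto simp: blk_def Gam_mult_index[OF assms(1)] simp del: index_mult_mat)

lemma blk_pcol_mult_odd:
  assumes "Z \<in> carrier_mat n n" "i < m" "odd i"
  shows "blk n i (pcol n m a k * Z) = 0\<^sub>m n n"
proof (rule eq_matI)
  fix r c assume "r < dim_row (0\<^sub>m n n :: 'a mat)" "c < dim_col (0\<^sub>m n n :: 'a mat)"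
  then have rc: "r < n" "c < n" by auto
  have "pcol n m a k $$ (i*n + r, t) = 0" if "t < n" for t
    using assms(2,3) rc that block_index_less[OF assms(2) rc(1)]
    by (simp add: pcol_def blockcol_def)
  then show "blk n i (pcol n m a k * Z) $$ (r,c) = 0\<^sub>m n n $$ (r,c)"
    using rc block_index_less[OF assms(2) rc(1)]
    by (simp add: blk_def index_mult_mat_sum[OF pcol_carrier assms(1)] del: index_mult_mat)
qed (auto simp: blk_def)

lemma blk_rcol_even:
  assumes "i < m" "even i"
  shows "blk n i (rcol n m a k) = 0\<^sub>m n n"
  using assms block_index_less[OF assms(1)]
  by (intro eq_matI) (auto simp: blk_def rcol_def blockcol_def)

lemma blk_odd_pcol_Gam:
  assumes "Z \<in> carrier_mat n n" "Y \<in> carrier_mat (m*n) n" "Suc j < m" "even j"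
  shows "blk n (Suc j) (pcol n m a k * Z + Gam n m * Y) = blk n j Y"
proof -
  have "blk n (Suc j) (pcol n m a k * Z + Gam n m * Y)
      = blk n (Suc j) (pcol n m a k * Z) + blk n (Suc j) (Gam n m * Y)"
    by (rule blk_add[OF mult_carrier_mat[OF pcol_carrier assms(1)]
          mult_carrier_mat[OF Gam_carrier assms(2)] assms(3)])
  also have "\<dots> = 0\<^sub>m n n + blk n j Y"
    using assms by (simp add: blk_pcol_mult_odd blk_Gam_mult_Suc)
  finally show ?thesis by (simp add: blk_def)
qed

definition even_blocks_vanish :: "nat \<Rightarrow> nat \<Rightarrow> 'a::comm_ring_1 mat \<Rightarrow> bool" where
  "even_blocks_vanish n m X \<longleftrightarrow> (\<forall>i<m. even i \<longrightarrow> blk n i X = 0\<^sub>m n n)"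

lemma Gev_even_blocks_vanish: "even_blocks_vanish n m (Gev n m a k l)"
proof (induction l arbitrary: k)
  case 0
  show ?case by (simp add: even_blocks_vanish_def blk_rcol_even)
next
  case (Suc l)
  let ?Y = "Gev n m a (k+2) l"
  let ?X = "pcol n m a (k+1) * lastblk n m ?Y + Gam n m * ?Y"
  have X: "?X \<in> carrier_mat (m*n) n"
    using Gev_carrier[of n m a "k+2" l] by (intro carrier_matI) auto
  have "blk n i (Gam n m * ?X) = 0\<^sub>m n n" if "i < m" "even i" for i
  proof (cases i)
    case 0
    then show ?thesis using blk_Gam_mult_0[OF X] that by simp
  next
    case (Suc i')
    then obtain j where i: "i = Suc (Suc j)" using \<open>even i\<close> by (cases i') auto
    then have "blk n i (Gam n m * ?X) = blk n j ?Y"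
      using that by (simp add: blk_Gam_mult_Suc[OF X] blk_odd_pcol_Gam)
    also have "\<dots> = 0\<^sub>m n n"
      using Suc.IH[of "k+2"] that i by (simp add: even_blocks_vanish_def)
    finally show ?thesis .
  qed
  then show ?case by (simp add: even_blocks_vanish_def)
qed

lemma lastblk_Ghat_eq_zero:
  assumes "2 \<le> m" "even m"
  shows "lastblk n m (Ghat n m a k l) = 0\<^sub>m n n"
proof -
  define j where "j = m - 2"
  have m: "m - 1 = Suc j" "Suc j < m" "even j"
    using assms unfolding j_def by presburger+
  have "lastblk n m (Ghat n m a k l) = blk n (Suc j) (Ghat n m a k l)"
    by (simp only: lastblk_eq_blk m(1))
  also have "\<dots> = blk n j (Gev n m a (k+1) l)"
    unfolding Ghat_def by (rule blk_odd_pcol_Gam[OF lastblk_carrier Gev_carrier m(2,3)])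
  also have "\<dots> = 0\<^sub>m n n"
    using Gev_even_blocks_vanish[of n m a "k+1" l] m by (simp add: even_blocks_vanish_def)
  finally show ?thesis .
qed

lemma sum_last_block:
  fixes m n :: nat
  assumes "0 < m"
  shows "(\<Sum>t<m*n. if t div n = m - 1 then g t else 0) = (\<Sum>u<n. g ((m - 1)*n + u))"
proof -
  have "{t \<in> {..<m*n}. t div n = m - 1} = (\<lambda>u. (m - 1)*n + u) ` {..<n}"
  proof (intro equalityI subsetI)
    fix t assume "t \<in> {t \<in> {..<m*n}. t div n = m - 1}"
    then have t: "t div n = m - 1" "0 < n" by (auto intro: gr0I)
    then have "t = (m - 1)*n + t mod n" using div_mult_mod_eq[of t n] by simp
    then show "t \<in> (\<lambda>u. (m - 1)*n + u) ` {..<n}" by (rule image_eqI) (simp add: t(2))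
  next
    fix t assume "t \<in> (\<lambda>u. (m - 1)*n + u) ` {..<n}"
    then obtain u where "u < n" "t = (m - 1)*n + u" by auto
    then show "t \<in> {t \<in> {..<m*n}. t div n = m - 1}"
      using block_index_less[of "m - 1" m u n] assms by auto
  qed
  then have "(\<Sum>t<m*n. if t div n = m - 1 then g t else 0) = sum g ((\<lambda>u. (m - 1)*n + u) ` {..<n})"
    by (simp add: sum.inter_filter[symmetric])
  also have "\<dots> = (\<Sum>u<n. g ((m - 1)*n + u))"
    by (subst sum.reindex) (auto simp: inj_on_def)
  finally show ?thesis .
qed

lemma Qmat_mult:
  assumes "0 < m" "\<And>i. i < m \<Longrightarrow> a k i \<in> carrier_mat n n"
    and X: "X \<in> carrier_mat (m*n) n"
  shows "Qmat n m a k * X = Gam n m * X + (pcol n m a k + rcol n m a k) * lastblk n m X"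
proof (rule eq_matI)
  fix i j assume "i < dim_row (Gam n m * X + (pcol n m a k + rcol n m a k) * lastblk n m X)"
     "j < dim_col (Gam n m * X + (pcol n m a k + rcol n m a k) * lastblk n m X)"
  then have ij: "i < m*n" "j < n" using X by auto
  have idiv: "i div n < m" using ij by (simp add: less_mult_imp_div_less)
  have Q_index: "Qmat n m a k $$ (i,t) = Gam n m $$ (i,t)
      + (if t div n = m - 1 then a k (i div n) $$ (i mod n, t mod n) else 0)" if "t < m*n" for t
  proof -
    have "i div n \<noteq> t div n + 1" if "t div n = m - 1" using idiv that by simp
    then show ?thesis using that ij by (auto simp: Qmat_def Gam_def)
  qed
  have pr_index: "pcol n m a k $$ (i,u) + rcol n m a k $$ (i,u) = a k (i div n) $$ (i mod n, u)" if "u < n" for u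
    using ij that assms(2)[OF idiv] by (auto simp: pcol_def rcol_def blockcol_def)
  have "(Qmat n m a k * X) $$ (i,j) = (\<Sum>t<m*n. Gam n m $$ (i,t) * X $$ (t,j))
      + (\<Sum>t<m*n. if t div n = m - 1 then a k (i div n) $$ (i mod n, t mod n) * X $$ (t,j) else 0)"
    using ij by (auto simp: index_mult_mat_sum[OF Qmat_carrier X] Q_index sum.distrib[symmetric]
        distrib_right simp del: index_mult_mat intro!: sum.cong)
  also have "(\<Sum>t<m*n. if t div n = m - 1 then a k (i div n) $$ (i mod n, t mod n) * X $$ (t,j) else 0)
      = (\<Sum>u<n. a k (i div n) $$ (i mod n, u) * X $$ ((m - 1)*n + u, j))"
    using assms(1) by (subst sum_last_block) auto
  also have "\<dots> = ((pcol n m a k + rcol n m a k) * lastblk n m X) $$ (i,j)"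
    using ij by (subst index_mult_mat_sum[of _ "m*n" n]) (auto simp: pr_index lastblk_def intro!: sum.cong)
  finally show "(Qmat n m a k * X) $$ (i,j) = (Gam n m * X + (pcol n m a k + rcol n m a k) * lastblk n m X) $$ (i,j)"
    using ij X
    by (subst index_add_mat(1)) (auto simp: index_mult_mat_sum[OF Gam_carrier X] simp del: index_mult_mat(1))
qed (use X in auto)

lemma Qprod_Suc_left: "Qprod n m a k (Suc l) = Qmat n m a k * Qprod n m a (k+1) l"
proof (induction l)
  case (Suc l)
  have "Qprod n m a k (Suc (Suc l)) = (Qmat n m a k * Qprod n m a (k+1) l) * Qmat n m a (k + 1 + int l)"
    using Suc by (simp add: add.assoc)
  also have "\<dots> = Qmat n m a k * (Qprod n m a (k+1) l * Qmat n m a (k + 1 + int l))"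
    by (rule assoc_mult_mat[OF Qmat_carrier Qprod_carrier Qmat_carrier])
  finally show ?case by simp
qed (simp add: left_mult_one_mat[OF Qmat_carrier] right_mult_one_mat[OF Qmat_carrier])

lemma Fcol_0: "Fcol n m a k 0 = rcol n m a k"
  by (simp add: Fcol_def)

lemma Fcol_Suc: "Fcol n m a k (Suc l) = Qmat n m a k * Fcol n m a (k+1) l"
proof -
  have "Fcol n m a k (Suc l) = (Qmat n m a k * Qprod n m a (k+1) l) * rcol n m a (k + 1 + int l)"
    unfolding Fcol_def Qprod_Suc_left by (simp add: add.assoc)
  also have "\<dots> = Qmat n m a k * Fcol n m a (k+1) l"
    unfolding Fcol_def by (rule assoc_mult_mat[OF Qmat_carrier Qprod_carrier rcol_carrier])
  finally show ?thesis .
qed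

definition Gcol :: "nat \<Rightarrow> nat \<Rightarrow> (int \<Rightarrow> nat \<Rightarrow> 'a::comm_ring_1 mat) \<Rightarrow> int \<Rightarrow> nat \<Rightarrow> 'a mat" where
  "Gcol n m a k j = (if even j then Gev n m a k (j div 2) else Ghat n m a k (j div 2))"

lemma Gcol_carrier [simp]: "Gcol n m a k j \<in> carrier_mat (m*n) n"
  by (simp add: Gcol_def)

lemma Qmat_mult_Gcol:
  assumes "2 \<le> m" "even m" "\<And>i. i < m \<Longrightarrow> a k i \<in> carrier_mat n n"
  shows "Qmat n m a k * Gcol n m a (k+1) j = rcol n m a k * alpha n m a (Suc j) 0 k + Gcol n m a k (Suc j)"
proof (cases "even j")
  case True
  let ?Y = "Gev n m a (k+1) (j div 2)"
  have "Qmat n m a k * ?Y = Gam n m * ?Y + (pcol n m a k + rcol n m a k) * lastblk n m ?Y"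
    using assms by (intro Qmat_mult) auto
  also have "\<dots> = Gam n m * ?Y + (pcol n m a k * lastblk n m ?Y + rcol n m a k * lastblk n m ?Y)"
    by (subst add_mult_distrib_mat[OF pcol_carrier rcol_carrier lastblk_carrier]) (rule refl)
  also have "\<dots> = rcol n m a k * lastblk n m ?Y + Ghat n m a k (j div 2)"
    unfolding Ghat_def
    by (intro eq_matI) (auto simp: ac_simps index_mult_mat_sum[of _ "m*n" "m*n"] simp del: index_mult_mat(1))
  finally show ?thesis using True by (simp add: Gcol_def)
next
  case False
  let ?Y = "Ghat n m a (k+1) (j div 2)"
  have "Qmat n m a k * ?Y = Gam n m * ?Y + (pcol n m a k + rcol n m a k) * 0\<^sub>m n n"
    using assms Qmat_mult[of m a k n ?Y] by (simp add: lastblk_Ghat_eq_zero)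
  also have "\<dots> = rcol n m a k * 0\<^sub>m n n + Gev n m a k (Suc (j div 2))"
    unfolding Gev_Suc_Ghat by (intro eq_matI) auto
  finally show ?thesis using False by (simp add: Gcol_def)
qed

lemma Fcol_expansion:
  assumes "2 \<le> m" "even m" "\<And>k i. i < m \<Longrightarrow> a k i \<in> carrier_mat n n"
  shows "Fcol n m a k j = msum (m*n) n (\<lambda>i. Fcol n m a k i * alpha n m a j i k) {..<j} + Gcol n m a k j"
proof (induction j arbitrary: k)
  case 0
  show ?case by (intro eq_matI) (auto simp: Fcol_0 Gcol_def msum_index)
next
  case (Suc j)
  let ?Q = "Qmat n m a k" and ?\<alpha> = "\<lambda>i. alpha n m a (Suc j) i k"
  define S where "S = msum (m*n) n (\<lambda>i. Fcol n m a (k+1) i * alpha n m a j i (k+1)) {..<j}"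
  define T where "T = msum (m*n) n (\<lambda>i. Fcol n m a k (Suc i) * ?\<alpha> (Suc i)) {..<j}"
  have T_carrier: "T \<in> carrier_mat (m*n) n" unfolding T_def by simp
  have R_carrier: "rcol n m a k * ?\<alpha> 0 \<in> carrier_mat (m*n) n"
    by (rule mult_carrier_mat[OF rcol_carrier alpha_carrier])
  have QS: "?Q * S = T"
  proof -
    have "?Q * (Fcol n m a (k+1) i * alpha n m a j i (k+1)) = Fcol n m a k (Suc i) * ?\<alpha> (Suc i)" for i
      by (simp add: Fcol_Suc assoc_mult_mat[of _ "m*n" "m*n" _ n _ n])
    then show ?thesis
      unfolding S_def T_def by (subst msum_mult_left[of _ "m*n"]) (auto simp: mult_carrier_mat)
  qed
  have "Fcol n m a k (Suc j) = ?Q * (S + Gcol n m a (k+1) j)"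
    unfolding Fcol_Suc S_def Suc.IH ..
  also have "\<dots> = ?Q * S + ?Q * Gcol n m a (k+1) j"
    unfolding S_def by (rule mult_add_distrib_mat[OF Qmat_carrier msum_carrier Gcol_carrier])
  also have "\<dots> = T + (rcol n m a k * ?\<alpha> 0 + Gcol n m a k (Suc j))"
    using Qmat_mult_Gcol[of m a k n j] assms by (simp add: QS)
  also have "\<dots> = (rcol n m a k * ?\<alpha> 0 + T) + Gcol n m a k (Suc j)"
    using assoc_add_mat[OF T_carrier R_carrier Gcol_carrier] comm_add_mat[OF R_carrier T_carrier]
    by simp
  also have "rcol n m a k * ?\<alpha> 0 + T = msum (m*n) n (\<lambda>i. Fcol n m a k i * ?\<alpha> i) {..<Suc j}"
    unfolding T_def by (subst msum_lessThan_Suc_shift) (auto simp: Fcol_0)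
  finally show ?case .
qed

theorem mainTheorem2:
  fixes n s N :: nat and a :: "int \<Rightarrow> nat \<Rightarrow> 'a::comm_ring_1 mat"
  assumes "n \<ge> 1" and "s \<ge> 2" and "N \<ge> 1"
    and "\<And>k i. i < 2*s \<Longrightarrow> a k i \<in> carrier_mat n n"
    and "\<And>k i. a (k + int N) i = a k i"
  shows "\<forall>k l.
    Fcol n (2*s) a k (2*l) =
      msum (2*s*n) n (\<lambda>r. Fcol n (2*s) a k (2*r-1) * alpha n (2*s) a (2*l) (2*r-1) k) {1..l}
      + Gev n (2*s) a k l
  \<and> Fcol n (2*s) a k (2*l+1) =
      msum (2*s*n) n (\<lambda>r. Fcol n (2*s) a k (2*r) * alpha n (2*s) a (2*l+1) (2*r) k) {0..l}
      + Ghat n (2*s) a k l"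
proof (intro allI conjI)
  fix k :: int and l :: nat
  let ?F = "Fcol n (2*s) a k" and ?\<alpha> = "\<lambda>j i. alpha n (2*s) a j i k"
  have expansion: "?F j = msum (2*s*n) n (\<lambda>i. ?F i * ?\<alpha> j i) {..<j} + Gcol n (2*s) a k j" for j
    using assms(2,4) by (intro Fcol_expansion) auto
  have vanish: "?F i * ?\<alpha> j i = 0\<^sub>m (2*s*n) n" if "\<not> (i < j \<and> odd (j - i))" for i j
    using that by (simp add: alpha_eq_zero right_mult_zero_mat[OF Fcol_carrier])
  have "msum (2*s*n) n (\<lambda>i. ?F i * ?\<alpha> (2*l) i) {..<2*l}
      = msum (2*s*n) n (\<lambda>r. ?F (2*r-1) * ?\<alpha> (2*l) (2*r-1)) {1..l}"
    by (rule msum_lessThan_even_vanishing) (intro vanish; simp)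
  moreover have "Gcol n (2*s) a k (2*l) = Gev n (2*s) a k l" by (simp add: Gcol_def)
  ultimately show "?F (2*l) = msum (2*s*n) n (\<lambda>r. ?F (2*r-1) * ?\<alpha> (2*l) (2*r-1)) {1..l}
      + Gev n (2*s) a k l"
    using expansion[of "2*l"] by simp
  have "msum (2*s*n) n (\<lambda>i. ?F i * ?\<alpha> (2*l+1) i) {..<2*l+1}
      = msum (2*s*n) n (\<lambda>r. ?F (2*r) * ?\<alpha> (2*l+1) (2*r)) {0..l}"
    by (rule msum_lessThan_odd_vanishing) (intro vanish; simp)
  moreover have "Gcol n (2*s) a k (2*l+1) = Ghat n (2*s) a k l" by (simp add: Gcol_def)
  ultimately show "?F (2*l+1) = msum (2*s*n) n (\<lambda>r. ?F (2*r) * ?\<alpha> (2*l+1) (2*r)) {0..l}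
      + Ghat n (2*s) a k l"
    using expansion[of "2*l+1"] by simp
qed

end
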